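(* Let $\Delta$ be a simplicial polytopal fan in $\mathbb{R}^d$ with ray generators $\mathbf{v}_1,\ldots,\mathbf{v}_n$. The set \[ \mathcal{U}=\{U\in\mathbb{R}^{m\times d}\colon|\hat{P}^\Delta(U,\mathbf{y})|=1\text{ for all }\mathbf{y}\in\mathbb{R}^m\}\subseteq\mathbb{R}^{m\times d} \] is semi-algebraic.
   Context: A set is semi-algebraic if it is a finite Boolean combination of sets of the form $\{\mathbf{x}\colon f_i(\mathbf{x})\ge0,\ i=1,\ldots,k\}$ with polynomials $f_i$. A fan is simplicial if every cone is generated by linearly independent vectors; polytopal if it is the normal fan of a polytope. $h_P(\mathbf{u})=\max_{\mathbf{x}\in P}\langle\mathbf{x},\mathbf{u}\rangle$. The deformation cone $\mathcal{P}(\Delta)$ is the set of polytopes whose normal fan is coarsened by $\Delta$, identified via support vectors $\mathbf{h}=(h_P(\mathbf{v}_i))_i$ with a closed polyhedral cone in $\mathbb{R}^n$. For $U\in\mathbb{R}^{m\times d}$ with rows $\mathbf{u}^{(1)},\ldots,\mathbf{u}^{(m)}$ and $\mathbf{y}\in\mathbb{R}^m$, the least-squares estimator $\hat{P}^\Delta(U,\mathbf{y})\subseteq\mathbb{R}^n$ is the set of support vectors of polytopes $P\in\mathcal{P}(\Delta)$ minimizing $\frac1m\sum_i(h_P(\mathbf{u}^{(i)})-y^{(i)})^2$. *)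

theory Defs
  imports "HOL-Analysis.Analysis"
begin

inductive polyfun :: "('a::euclidean_space \<Rightarrow> real) \<Rightarrow> bool" where
  const: "polyfun (\<lambda>x. c)"
| coord: "b \<in> Basis \<Longrightarrow> polyfun (\<lambda>x. x \<bullet> b)"
| add: "polyfun f \<Longrightarrow> polyfun g \<Longrightarrow> polyfun (\<lambda>x. f x + g x)"
| mult: "polyfun f \<Longrightarrow> polyfun g \<Longrightarrow> polyfun (\<lambda>x. f x * g x)"

inductive semialgebraic :: "('a::euclidean_space) set \<Rightarrow> bool" where
  basic: "finite F \<Longrightarrow> (\<forall>f\<in>F. polyfun f) \<Longrightarrow> semialgebraic {x. \<forall>f\<in>F. f x \<ge> 0}"
| compl: "semialgebraic S \<Longrightarrow> semialgebraic (- S)"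
| union: "semialgebraic S \<Longrightarrow> semialgebraic T \<Longrightarrow> semialgebraic (S \<union> T)"

definition support_fn :: "('a::euclidean_space) set \<Rightarrow> 'a \<Rightarrow> real" where
  "support_fn P u = (SUP x\<in>P. x \<bullet> u)"

definition normal_cone :: "('a::euclidean_space) set \<Rightarrow> 'a set \<Rightarrow> 'a set" where
  "normal_cone P F = {u. \<forall>x\<in>F. x \<bullet> u = support_fn P u}"

definition normal_fan :: "('a::euclidean_space) set \<Rightarrow> 'a set set" where
  "normal_fan P = {normal_cone P F | F. F face_of P \<and> F \<noteq> {}}"

definition pos_hull :: "('a::euclidean_space) set \<Rightarrow> 'a set" where
  "pos_hull S = {x. \<exists>c. (\<forall>s\<in>S. c s \<ge> 0) \<and> x = (\<Sum>s\<in>S. c s *\<^sub>R s)}"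

definition polytopal_fan :: "('a::euclidean_space) set set \<Rightarrow> bool" where
  "polytopal_fan \<Delta> \<longleftrightarrow> (\<exists>Q. polytope Q \<and> Q \<noteq> {} \<and> \<Delta> = normal_fan Q)"

definition simplicial_fan :: "('a::euclidean_space) set set \<Rightarrow> bool" where
  "simplicial_fan \<Delta> \<longleftrightarrow> (\<forall>\<sigma>\<in>\<Delta>. \<exists>S. finite S \<and> independent S \<and> \<sigma> = pos_hull S)"

definition ray_generators :: "('a::euclidean_space) set set \<Rightarrow> ('n \<Rightarrow> 'a) \<Rightarrow> bool" where
  "ray_generators \<Delta> v \<longleftrightarrow> inj v \<and> (\<forall>i. v i \<noteq> 0) \<and>
     {\<sigma>\<in>\<Delta>. aff_dim \<sigma> = 1} = range (\<lambda>i. pos_hull {v i})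
     \<and> (\<forall>i j. i \<noteq> j \<longrightarrow> pos_hull {v i} \<noteq> pos_hull {v j})"

definition coarsened_by :: "('a::euclidean_space) set set \<Rightarrow> 'a set set \<Rightarrow> bool" where
  "coarsened_by N \<Delta> \<longleftrightarrow> (\<forall>\<sigma>\<in>\<Delta>. \<exists>\<tau>\<in>N. \<sigma> \<subseteq> \<tau>)"

definition deformation_cone :: "('a::euclidean_space) set set \<Rightarrow> 'a set set" where
  "deformation_cone \<Delta> = {P. polytope P \<and> P \<noteq> {} \<and> coarsened_by (normal_fan P) \<Delta>}"

definition support_vector :: "('n::finite \<Rightarrow> 'a::euclidean_space) \<Rightarrow> 'a set \<Rightarrow> real^'n" where
  "support_vector v P = (\<chi> i. support_fn P (v i))"

definition ls_loss :: "real^'d^'m \<Rightarrow> real^'m \<Rightarrow> (real^'d) set \<Rightarrow> real" where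
  "ls_loss U y P = (1 / real CARD('m)) * (\<Sum>i\<in>UNIV. (support_fn P (U $ i) - y $ i)^2)"

definition lse :: "(real^'d) set set \<Rightarrow> ('n::finite \<Rightarrow> real^'d) \<Rightarrow> real^'d^'m \<Rightarrow> real^'m \<Rightarrow> (real^'n) set" where
  "lse \<Delta> v U y = {support_vector v P | P. P \<in> deformation_cone \<Delta> \<and>
      (\<forall>Q\<in>deformation_cone \<Delta>. ls_loss U y P \<le> ls_loss U y Q)}"

end

theory Submission
  imports Defs
begin

(*
  On each cone tau of the complete simplicial fan Delta, the ray generators v j lying in tau are
  linearly independent and span tau, so there are linear coordinate functions c j with
  u = (SUM j. c j u *R v j) and c j u >= 0 for u in tau; every polytope P of the deformation cone
  then satisfies h_P u = (SUM j. c j u * h_P (v j)) on tau. Once a cone tau i is chosen for every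
  row U $ i, the loss is |A h - y|^2 / m for a matrix A whose entries are linear in U, where h
  ranges over the set H of support vectors of the deformation cone; H is closed, convex and
  contains 0. The least-squares solution is unique for every y iff A is injective on span H, and
  writing span H as the kernel of a fixed matrix B this says det (A^T A + B^T B) ~= 0. So the set
  of such U is a finite union, over the choices of the tau i, of sets given by linear equations,
  linear inequalities and one polynomial inequation.
*)

section \<open>Polynomial functions and semialgebraic sets\<close>

lemma polyfun_sum:
  "finite A \<Longrightarrow> (\<And>a. a \<in> A \<Longrightarrow> polyfun (f a)) \<Longrightarrow> polyfun (\<lambda>x. \<Sum>a\<in>A. f a x)"
proof (induction A rule: finite_induct)
  case empty
  show ?case
    using polyfun.const[of 0] by simp
qed (simp add: polyfun.add)

lemma polyfun_prod:
  "finite A \<Longrightarrow> (\<And>a. a \<in> A \<Longrightarrow> polyfun (f a)) \<Longrightarrow> polyfun (\<lambda>x. \<Prod>a\<in>A. f a x)"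
proof (induction A rule: finite_induct)
  case empty
  show ?case
    using polyfun.const[of 1] by simp
qed (simp add: polyfun.mult)

lemma polyfun_linear:
  fixes g :: "'a::euclidean_space \<Rightarrow> real"
  assumes "linear g"
  shows "polyfun g"
proof -
  have "g x = (\<Sum>b\<in>Basis. (x \<bullet> b) * g b)" for x
  proof -
    have "g x = g (\<Sum>b\<in>Basis. (x \<bullet> b) *\<^sub>R b)"
      by (simp add: euclidean_representation)
    also have "\<dots> = (\<Sum>b\<in>Basis. (x \<bullet> b) * g b)"
      using assms by (simp add: linear_sum linear_scale)
    finally show ?thesis .
  qed
  then have eq: "g = (\<lambda>x. \<Sum>b\<in>Basis. (x \<bullet> b) * g b)"
    by (rule ext)
  show ?thesis
    by (subst eq) (intro polyfun_sum polyfun.mult polyfun.coord polyfun.const, auto)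
qed

lemma linear_compose_inner_left: "linear (\<lambda>x. f x \<bullet> b)" if "linear f"
  using linear_compose[OF that bounded_linear.linear[OF bounded_linear_inner_left]]
  by (simp add: o_def)

lemma linear_compose_scaleR_left: "linear f \<Longrightarrow> linear (\<lambda>x. f x *\<^sub>R w)"
  unfolding linear_iff by (simp add: scaleR_add_left)

lemma polyfun_compose_linear:
  fixes L :: "'a::euclidean_space \<Rightarrow> 'b::euclidean_space"
  assumes "polyfun f" and "linear L"
  shows "polyfun (\<lambda>x. f (L x))"
  using assms(1)
proof induction
  case (const c)
  show ?case
    by (rule polyfun.const)
next
  case (coord b)
  show ?case
    using assms(2) by (intro polyfun_linear linear_compose_inner_left)
next
  case (add f g)
  from add.IH show ?case
    by (rule polyfun.add)
next
  case (mult f g)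
  from mult.IH show ?case
    by (rule polyfun.mult)
qed

lemma polyfun_det:
  fixes M :: "'a::euclidean_space \<Rightarrow> real^'n^'n"
  assumes "\<And>i j. polyfun (\<lambda>x. M x $ i $ j)"
  shows "polyfun (\<lambda>x. det (M x))"
  unfolding det_def
  by (intro polyfun_sum polyfun.mult polyfun.const polyfun_prod assms) auto

lemma semialgebraic_UNIV: "semialgebraic UNIV"
  using semialgebraic.basic[of "{}"] by simp

lemma semialgebraic_Int: "semialgebraic S \<Longrightarrow> semialgebraic T \<Longrightarrow> semialgebraic (S \<inter> T)"
proof -
  assume "semialgebraic S" "semialgebraic T"
  then have "semialgebraic (- (- S \<union> - T))"
    by (intro semialgebraic.intros)
  then show ?thesis
    by simp
qed

lemma semialgebraic_UN:
  "finite A \<Longrightarrow> (\<And>a. a \<in> A \<Longrightarrow> semialgebraic (S a)) \<Longrightarrow> semialgebraic (\<Union>a\<in>A. S a)"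
proof (induction A rule: finite_induct)
  case empty
  show ?case
    using semialgebraic.compl[OF semialgebraic_UNIV] by simp
qed (simp add: semialgebraic.union)

lemma semialgebraic_INT:
  "finite A \<Longrightarrow> (\<And>a. a \<in> A \<Longrightarrow> semialgebraic (S a)) \<Longrightarrow> semialgebraic (\<Inter>a\<in>A. S a)"
proof (induction A rule: finite_induct)
  case empty
  show ?case
    using semialgebraic_UNIV by simp
qed (simp add: semialgebraic_Int)

lemma semialgebraic_polyfun_nonneg: "polyfun f \<Longrightarrow> semialgebraic {x. f x \<ge> 0}"
  using semialgebraic.basic[of "{f}"] by simp

lemma semialgebraic_polyfun_zero: "polyfun f \<Longrightarrow> semialgebraic {x. f x = 0}"
proof -
  assume f: "polyfun f"
  then have "polyfun (\<lambda>x. - f x)"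
    using polyfun.mult[OF polyfun.const[of "-1"] f] by simp
  with f have "semialgebraic {x. \<forall>g\<in>{f, \<lambda>x. - f x}. g x \<ge> 0}"
    by (intro semialgebraic.basic) auto
  moreover have "{x. \<forall>g\<in>{f, \<lambda>x. - f x}. g x \<ge> 0} = {x. f x = 0}"
    by auto
  ultimately show ?thesis
    by simp
qed

lemma semialgebraic_polyfun_nonzero: "polyfun f \<Longrightarrow> semialgebraic {x. f x \<noteq> 0}"
  using semialgebraic.compl[OF semialgebraic_polyfun_zero] by (simp add: Compl_eq)

lemma semialgebraic_linear_vimage:
  fixes L :: "'a::euclidean_space \<Rightarrow> 'b::euclidean_space"
  assumes "semialgebraic S" and "linear L"
  shows "semialgebraic (L -` S)"
  using assms(1)
proof induction
  case (basic F)
  have "semialgebraic {x. \<forall>g\<in>(\<lambda>f x. f (L x)) ` F. g x \<ge> 0}"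
    using basic assms(2) by (intro semialgebraic.basic) (auto intro: polyfun_compose_linear)
  moreover have "{x. \<forall>g\<in>(\<lambda>f x. f (L x)) ` F. g x \<ge> 0} = L -` {x. \<forall>f\<in>F. f x \<ge> 0}"
    by auto
  ultimately show ?case
    by simp
next
  case (compl S)
  then show ?case
    by (simp add: vimage_Compl semialgebraic.compl)
next
  case (union S T)
  then show ?case
    by (simp add: vimage_Un semialgebraic.union)
qed

lemma semialgebraic_linear_kernel:
  fixes L :: "'a::euclidean_space \<Rightarrow> 'b::euclidean_space"
  assumes "linear L"
  shows "semialgebraic {x. L x = 0}"
proof -
  have "{x. L x = 0} = (\<Inter>b\<in>Basis. {x. L x \<bullet> b = 0})"
    by (auto simp: euclidean_all_zero_iff)
  also have "semialgebraic \<dots>"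
    using assms by (intro semialgebraic_INT semialgebraic_polyfun_zero polyfun_linear linear_compose_inner_left) auto
  finally show ?thesis .
qed

lemma semialgebraic_rows_mem:
  assumes "\<And>i. semialgebraic (S i)"
  shows "semialgebraic {U :: real^'d^'m. \<forall>i. U $ i \<in> S i}"
proof -
  have "{U :: real^'d^'m. \<forall>i. U $ i \<in> S i} = (\<Inter>i. (\<lambda>U. U $ i) -` S i)"
    by auto
  also have "semialgebraic \<dots>"
    using assms by (intro semialgebraic_INT semialgebraic_linear_vimage bounded_linear.linear[OF bounded_linear_vec_nth]) auto
  finally show ?thesis .
qed

section \<open>Linear algebra\<close>

lemma independent_coefficients_eq:
  assumes "finite S" "independent S" "(\<Sum>s\<in>S. a s *\<^sub>R s) = (\<Sum>s\<in>S. b s *\<^sub>R s)" "t \<in> S"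
  shows "a t = b t"
proof (rule ccontr)
  assume "a t \<noteq> b t"
  moreover have "(\<Sum>s\<in>S. (a s - b s) *\<^sub>R s) = 0"
    using assms(3) by (simp add: scaleR_diff_left sum_subtractf)
  ultimately have "dependent S"
    using assms(1,4) unfolding dependent_finite[OF assms(1)] by (auto intro!: exI[of _ "\<lambda>s. a s - b s"])
  then show False
    using assms(2) by simp
qed

lemma independent_dual_functionals:
  fixes S :: "'a::euclidean_space set"
  assumes "independent S"
  obtains g :: "'a \<Rightarrow> 'a \<Rightarrow> real"
  where "\<And>s. linear (g s)" and "\<And>s t. t \<in> S \<Longrightarrow> g s t = (if s = t then 1 else 0)"
proof -
  have "\<exists>gs. linear gs \<and> (\<forall>t\<in>S. gs t = (if s = t then 1 else 0))" for s
    using real_vector.linear_independent_extend[OF assms, of "\<lambda>t. if s = t then 1 else 0"] .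
  then obtain g :: "'a \<Rightarrow> 'a \<Rightarrow> real" where "\<And>s. linear (g s) \<and> (\<forall>t\<in>S. g s t = (if s = t then 1 else 0))"
    by metis
  then show ?thesis
    by (intro that[of g]) simp_all
qed

definition stacked_gram :: "real^'n^'m \<Rightarrow> real^'n^'k \<Rightarrow> real^'n^'n" where
  "stacked_gram A B = transpose A ** A + transpose B ** B"

lemma det_stacked_gram_nonzero_iff:
  "det (stacked_gram A B) \<noteq> 0 \<longleftrightarrow> (\<forall>x. A *v x = 0 \<and> B *v x = 0 \<longrightarrow> x = 0)"
proof -
  let ?M = "stacked_gram A B"
  have Mx: "?M *v x = transpose A *v (A *v x) + transpose B *v (B *v x)" for x
    by (simp add: stacked_gram_def matrix_vector_mult_add_rdistrib matrix_vector_mul_assoc)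
  have gram: "x \<bullet> (transpose C *v (C *v x)) = norm (C *v x)^2" for C :: "real^'n^'l" and x
    by (simp add: inner_commute[of x] dot_lmul_matrix power2_norm_eq_inner)
  have ker: "?M *v x = 0 \<longleftrightarrow> A *v x = 0 \<and> B *v x = 0" for x
  proof
    have "x \<bullet> (?M *v x) = norm (A *v x)^2 + norm (B *v x)^2"
      unfolding Mx inner_add_right gram ..
    moreover assume "?M *v x = 0"
    ultimately have "norm (A *v x)^2 + norm (B *v x)^2 = 0"
      by simp
    then show "A *v x = 0 \<and> B *v x = 0"
      by (simp add: add_nonneg_eq_0_iff)
  qed (simp add: Mx)
  have "det ?M \<noteq> 0 \<longleftrightarrow> inj ((*v) ?M)"
    using det_nz_iff_inj[OF matrix_vector_mul_linear[of ?M]] by (simp add: matrix_of_matrix_vector_mul)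
  also have "\<dots> \<longleftrightarrow> (\<forall>x. ?M *v x = 0 \<longrightarrow> x = 0)"
    by (rule linear_injective_0[OF matrix_vector_mul_linear])
  finally show ?thesis
    by (simp add: ker)
qed

lemma subspace_eq_kernel_matrix:
  fixes W :: "(real^'n) set"
  assumes "subspace W"
  obtains B :: "real^'n^'n" where "W = {x. B *v x = 0}"
proof -
  obtain T where T: "pairwise orthogonal T" "span T = W"
    using orthogonal_basis_subspace[OF assms] by metis
  have "finite T"
    using T(1) by (rule pairwise_orthogonal_imp_finite)
  \<comment> \<open>the orthogonal projection onto the orthogonal complement of \<open>W\<close>\<close>
  define p where "p x = x - (\<Sum>b\<in>T. (b \<bullet> x / (b \<bullet> b)) *\<^sub>R b)" for x
  have "linear (\<lambda>x. (b \<bullet> x / (b \<bullet> b)) *\<^sub>R b)" for b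
    by (rule linearI) (simp_all add: inner_add_right add_divide_distrib scaleR_add_left)
  then have "linear p"
    unfolding p_def by (intro linear_compose_sub linear_ident linear_compose_sum \<open>finite T\<close> ballI)
  have "W = {x. p x = 0}"
  proof (intro equalityI subsetI CollectI)
    fix x assume "x \<in> W"
    then have "x \<in> span T"
      using T(2) by simp
    then have "p x \<in> span T"
      unfolding p_def by (intro span_diff span_sum span_scale) (auto intro: span_base)
    then have "orthogonal (p x) (p x)"
      unfolding p_def by (rule Gram_Schmidt_step[OF T(1)])
    then show "p x = 0"
      by (simp add: orthogonal_def)
  next
    fix x assume "x \<in> {x. p x = 0}"
    then have "x = (\<Sum>b\<in>T. (b \<bullet> x / (b \<bullet> b)) *\<^sub>R b)"
      by (simp add: p_def)
    also have "\<dots> \<in> span T"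
      by (simp add: span_sum span_scale span_base)
    finally show "x \<in> W"
      using T(2) by simp
  qed
  then show ?thesis
    using that[of "matrix p"] matrix_vector_mul(2)[OF \<open>linear p\<close>] by metis
qed

section \<open>Unique nearest points under a linear map\<close>

lemma closed_linear_image_inj_on_span:
  fixes f :: "'a::euclidean_space \<Rightarrow> 'b::euclidean_space"
  assumes f: "linear f" "inj_on f (span H)" and "closed H"
  shows "closed (f ` H)"
proof -
  obtain g where g: "linear g" "\<And>x. x \<in> span H \<Longrightarrow> g (f x) = x"
    using linear_inj_on_left_inverse[OF f] by blast
  have "f ` H = f ` span H \<inter> g -` H"
    using g(2) by (auto intro: span_base)
  moreover have "closed (f ` span H)"
    using f by (intro closed_injective_image_subspace subspace_span closed_subspace)
      (auto simp: linear_conv_bounded_linear linear_inj_on_iff_eq_0)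
  moreover have "closed (g -` H)"
    using g(1) \<open>closed H\<close>
    by (intro continuous_closed_vimage linear_continuous_at) (simp_all add: linear_conv_bounded_linear)
  ultimately show ?thesis
    by (simp add: closed_Int)
qed

lemma inj_on_span_if_nearest_unique:
  fixes f :: "'a::euclidean_space \<Rightarrow> 'b::euclidean_space"
  assumes f: "linear f" and H: "convex H" "0 \<in> H"
    and unique: "\<And>y. card {h\<in>H. \<forall>h'\<in>H. dist (f h) y \<le> dist (f h') y} = 1"
  shows "inj_on f (span H)"
proof -
  have "z = 0" if z: "z \<in> span H" "f z = 0" for z
  proof (rule ccontr)
    assume "z \<noteq> 0"
    have "rel_interior H \<noteq> {}"
      using H by (auto simp: rel_interior_eq_empty)
    then obtain h0 where "h0 \<in> rel_interior H"
      by blast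
    then obtain e where e: "e > 0" "cball h0 e \<inter> span H \<subseteq> H" and "h0 \<in> H"
      using affine_hull_span_0[OF hull_inc[OF H(2)]] by (auto simp: mem_rel_interior_cball)
    define h1 where "h1 = h0 + (e / norm z) *\<^sub>R z"
    have "h1 \<in> cball h0 e \<inter> span H"
      using e(1) z(1) \<open>h0 \<in> H\<close> by (auto simp: h1_def dist_norm intro: span_add span_scale span_base)
    then have "h1 \<in> H"
      using e(2) by blast
    define N where "N = {h\<in>H. \<forall>h'\<in>H. dist (f h) (f h0) \<le> dist (f h') (f h0)}"
    have "f h1 = f h0"
      using f z(2) by (simp add: h1_def linear_add linear_scale)
    then have "{h0, h1} \<subseteq> N"
      using \<open>h0 \<in> H\<close> \<open>h1 \<in> H\<close> by (auto simp: N_def)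
    moreover obtain h where "N = {h}"
      using unique[of "f h0"] card_1_singleton_iff[of N] by (auto simp: N_def)
    moreover have "h1 \<noteq> h0"
      using e(1) \<open>z \<noteq> 0\<close> by (simp add: h1_def)
    ultimately show False
      by auto
  qed
  then show ?thesis
    using f by (simp add: linear_inj_on_iff_eq_0)
qed

lemma nearest_unique_if_inj_on_span:
  fixes f :: "'a::euclidean_space \<Rightarrow> 'b::euclidean_space"
  assumes f: "linear f" "inj_on f (span H)" and H: "convex H" "closed H" "H \<noteq> {}"
  shows "card {h\<in>H. \<forall>h'\<in>H. dist (f h) y \<le> dist (f h') y} = 1"
proof -
  have K: "closed (f ` H)" "convex (f ` H)" "f ` H \<noteq> {}"
    using closed_linear_image_inj_on_span[OF f H(2)] convex_linear_image[OF f(1) H(1)] H(3)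
    by blast+
  define p where "p = closest_point (f ` H) y"
  have "p \<in> f ` H"
    unfolding p_def by (rule closest_point_exists(1)[OF K(1,3)])
  then obtain hp where hp: "hp \<in> H" "f hp = p"
    by blast
  define N where "N = {h\<in>H. \<forall>h'\<in>H. dist (f h) y \<le> dist (f h') y}"
  have "h = hp" if h: "h \<in> N" for h
  proof -
    have "\<forall>k\<in>f ` H. dist y (f h) \<le> dist y k"
      using h by (simp add: N_def dist_commute)
    then have "f h = f hp"
      unfolding hp(2) p_def using K(1,2) h by (intro closest_point_unique) (auto simp: N_def)
    moreover have "h \<in> span H" "hp \<in> span H"
      using h hp(1) by (auto simp: N_def intro: span_base)
    ultimately show ?thesis
      by (rule inj_onD[OF f(2)])
  qed
  moreover have "hp \<in> N"
    using hp closest_point_exists(2)[OF K(1,3), of y] by (auto simp: N_def p_def dist_commute)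
  ultimately have "N = {hp}"
    by blast
  then show ?thesis
    by (simp add: N_def)
qed

lemma card_nearest_eq_1_iff:
  fixes f :: "'a::euclidean_space \<Rightarrow> 'b::euclidean_space"
  assumes "linear f" and "convex H" "closed H" "0 \<in> H"
  shows "(\<forall>y. card {h\<in>H. \<forall>h'\<in>H. dist (f h) y \<le> dist (f h') y} = 1) \<longleftrightarrow> inj_on f (span H)"
  using assms inj_on_span_if_nearest_unique[of f H] nearest_unique_if_inj_on_span[of f H] by blast

section \<open>Support functions and normal cones\<close>

definition support_face :: "'a::euclidean_space set \<Rightarrow> 'a \<Rightarrow> 'a set" where
  "support_face P u = {x\<in>P. x \<bullet> u = support_fn P u}"

lemma support_fn_upper:
  assumes "bounded P" and "x \<in> P"
  shows "x \<bullet> u \<le> support_fn P u"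
proof -
  have "bounded ((\<lambda>x. x \<bullet> u) ` P)"
    using assms(1) by (rule bounded_linear_image[OF _ bounded_linear_inner_left])
  then show ?thesis
    unfolding support_fn_def using assms(2) by (intro cSUP_upper bounded_imp_bdd_above)
qed

lemma support_fn_eqI:
  assumes "x \<in> P" and "\<And>y. y \<in> P \<Longrightarrow> y \<bullet> u \<le> x \<bullet> u"
  shows "support_fn P u = x \<bullet> u"
  unfolding support_fn_def using assms
  by (intro antisym cSUP_least cSUP_upper bdd_aboveI2) auto

lemma support_fn_zero: "P \<noteq> {} \<Longrightarrow> support_fn P 0 = 0"
  by (simp add: support_fn_def)

lemma support_face_face_of:
  assumes "convex P" and "bounded P"
  shows "support_face P u face_of P"
proof -
  have "support_face P u = P \<inter> {x. u \<bullet> x = support_fn P u}"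
    unfolding support_face_def by (simp add: inner_commute Int_def)
  also have "\<dots> face_of P"
    using assms(1) by (rule face_of_Int_supporting_hyperplane_le)
      (metis assms(2) inner_commute support_fn_upper)
  finally show ?thesis .
qed

lemma support_face_nonempty:
  assumes "compact P" and "P \<noteq> {}"
  shows "support_face P u \<noteq> {}"
proof -
  obtain x where x: "x \<in> P" "\<And>y. y \<in> P \<Longrightarrow> y \<bullet> u \<le> x \<bullet> u"
    using continuous_attains_sup[OF assms continuous_on_inner[OF continuous_on_id continuous_on_const]]
    by blast
  then have "x \<in> support_face P u"
    unfolding support_face_def using support_fn_eqI[of x P u] by simp
  then show ?thesis
    by blast
qed

lemma mem_normal_cone_support_face: "u \<in> normal_cone P (support_face P u)"
  by (simp add: normal_cone_def support_face_def)

lemma zero_mem_normal_cone: "P \<noteq> {} \<Longrightarrow> 0 \<in> normal_cone P F"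
  by (simp add: normal_cone_def support_fn_zero)

lemma normal_cone_antimono: "F \<subseteq> G \<Longrightarrow> normal_cone P G \<subseteq> normal_cone P F"
  by (auto simp: normal_cone_def)

lemma subset_normal_fan_cone:
  assumes "polytope P" and "x \<in> P" and "\<tau> \<noteq> {}" and "\<And>u. u \<in> \<tau> \<Longrightarrow> x \<bullet> u = support_fn P u"
  shows "\<exists>\<sigma>\<in>normal_fan P. \<tau> \<subseteq> \<sigma>"
proof -
  define F where "F = (\<Inter>u\<in>\<tau>. support_face P u)"
  have "F face_of P"
    unfolding F_def using assms(1,3)
    by (intro face_of_Inter) (auto intro: support_face_face_of polytope_imp_convex polytope_imp_bounded)
  moreover have "x \<in> F"
    using assms(2,4) by (simp add: F_def support_face_def)
  moreover have "\<tau> \<subseteq> normal_cone P F"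
    using assms(3) by (auto simp: F_def normal_cone_def support_face_def)
  ultimately show ?thesis
    unfolding normal_fan_def by blast
qed

lemma vertices_below_perturbed_support:
  assumes "finite V" "V \<subseteq> Q" "bounded Q" and u: "u \<in> normal_cone Q (support_face Q s)"
  obtains e where "e > 0" and "\<And>y. y \<in> V \<Longrightarrow> y \<bullet> (s - e *\<^sub>R u) \<le> support_fn Q s - e * support_fn Q u"
proof -
  let ?bound = "\<lambda>e. support_fn Q s - e * support_fn Q u"
  have vertex: "\<forall>\<^sub>F e in at_right 0. y \<bullet> (s - e *\<^sub>R u) \<le> ?bound e" if "y \<in> V" for y
  proof (cases "y \<in> support_face Q s")
    case True
    then have "y \<bullet> u = support_fn Q u"
      using u by (simp add: normal_cone_def)
    then show ?thesis
      using True by (simp add: support_face_def inner_diff_right)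
  next
    case False
    then have "y \<bullet> s < support_fn Q s"
      using support_fn_upper[OF assms(3), of y s] assms(2) that by (auto simp: support_face_def)
    moreover have "((\<lambda>e. e * (support_fn Q u - y \<bullet> u)) \<longlongrightarrow> 0) (at_right 0)"
      by (auto intro!: tendsto_eq_intros)
    ultimately have "\<forall>\<^sub>F e in at_right 0. e * (support_fn Q u - y \<bullet> u) < support_fn Q s - y \<bullet> s"
      by (intro order_tendstoD(2)) auto
    then show ?thesis
      by eventually_elim (simp add: inner_diff_right algebra_simps)
  qed
  have "\<forall>\<^sub>F e in at_right 0. \<forall>y\<in>V. y \<bullet> (s - e *\<^sub>R u) \<le> ?bound e"
    using assms(1) vertex by (intro eventually_ball_finite) auto
  then have "\<forall>\<^sub>F e in at_right 0. e > 0 \<and> (\<forall>y\<in>V. y \<bullet> (s - e *\<^sub>R u) \<le> ?bound e)"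
    by (intro eventually_conj eventually_at_right_less)
  then show ?thesis
    using that eventually_happens' trivial_limit_at_right_real by blast
qed

lemma normal_cone_support_face_perturb:
  assumes "polytope Q" and u: "u \<in> normal_cone Q (support_face Q s)"
  shows "\<exists>e>0. s - e *\<^sub>R u \<in> normal_cone Q (support_face Q s)"
proof -
  obtain V where V: "finite V" "Q = convex hull V"
    using assms(1) unfolding polytope_def by blast
  let ?bound = "\<lambda>e. support_fn Q s - e * support_fn Q u"
  have "V \<subseteq> Q"
    using V(2) by (simp add: hull_subset)
  obtain e where e: "e > 0" "\<And>y. y \<in> V \<Longrightarrow> y \<bullet> (s - e *\<^sub>R u) \<le> ?bound e"
    using V(1) \<open>V \<subseteq> Q\<close> polytope_imp_bounded[OF assms(1)] u
    by (rule vertices_below_perturbed_support) blast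
  have "V \<subseteq> {y. (s - e *\<^sub>R u) \<bullet> y \<le> ?bound e}"
    using e(2) by (simp add: subset_eq inner_commute)
  then have Q: "Q \<subseteq> {y. (s - e *\<^sub>R u) \<bullet> y \<le> ?bound e}"
    unfolding V(2) by (intro hull_minimal convex_halfspace_le)
  have "x \<bullet> (s - e *\<^sub>R u) = support_fn Q (s - e *\<^sub>R u)" if x: "x \<in> support_face Q s" for x
  proof -
    have "x \<in> Q" "x \<bullet> (s - e *\<^sub>R u) = ?bound e"
      using x u by (auto simp: support_face_def normal_cone_def inner_diff_right)
    then show ?thesis
      using Q by (intro support_fn_eqI[symmetric]) (auto simp: inner_commute)
  qed
  then have "s - e *\<^sub>R u \<in> normal_cone Q (support_face Q s)"
    by (simp add: normal_cone_def)
  with e(1) show ?thesis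
    by blast
qed

section \<open>Coordinates on simplicial cones\<close>

lemma scaleR_mem_pos_hull:
  assumes "finite S" "s \<in> S" "a \<ge> 0"
  shows "a *\<^sub>R s \<in> pos_hull S"
proof -
  have "(\<Sum>t\<in>S. (if t = s then a else 0) *\<^sub>R t) = (\<Sum>t\<in>S. if t = s then a *\<^sub>R s else 0)"
    by (intro sum.cong) auto
  also have "\<dots> = a *\<^sub>R s"
    using assms(1,2) by simp
  finally show ?thesis
    unfolding pos_hull_def using assms(3) by (intro CollectI exI[of _ "\<lambda>t. if t = s then a else 0"]) auto
qed

lemma pos_hull_singleton: "pos_hull {w} = {c *\<^sub>R w | c. c \<ge> 0}"
  unfolding pos_hull_def by auto

lemma pos_hull_extreme_ray:
  assumes S: "finite S" "independent S" "s \<in> S" and "e > 0"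
    and t: "t \<in> pos_hull S" "s - e *\<^sub>R t \<in> pos_hull S"
  shows "t \<in> span {s}"
proof -
  obtain a where a: "\<forall>r\<in>S. a r \<ge> 0" "t = (\<Sum>r\<in>S. a r *\<^sub>R r)"
    using t(1) unfolding pos_hull_def by blast
  obtain b where b: "\<forall>r\<in>S. b r \<ge> 0" "s - e *\<^sub>R t = (\<Sum>r\<in>S. b r *\<^sub>R r)"
    using t(2) unfolding pos_hull_def by blast
  have "(\<Sum>r\<in>S. (b r + e * a r) *\<^sub>R r) = (\<Sum>r\<in>S. b r *\<^sub>R r) + e *\<^sub>R (\<Sum>r\<in>S. a r *\<^sub>R r)"
    by (simp add: scaleR_add_left sum.distrib scaleR_sum_right)
  also have "\<dots> = s"
    by (simp flip: a(2) b(2))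
  also have "\<dots> = (\<Sum>r\<in>S. (if r = s then 1 else 0) *\<^sub>R r)"
  proof -
    have "(\<Sum>r\<in>S. (if r = s then 1 else 0) *\<^sub>R r) = (\<Sum>r\<in>S. if r = s then s else 0)"
      by (intro sum.cong) auto
    then show ?thesis
      using S(1,3) by simp
  qed
  finally have coeff: "b r + e * a r = (if r = s then 1 else 0)" if "r \<in> S" for r
    by (rule independent_coefficients_eq[OF S(1,2) _ that])
  have "a r = 0" if "r \<in> S" "r \<noteq> s" for r
  proof -
    have "b r + e * a r = 0" "b r \<ge> 0" "e * a r \<ge> 0"
      using coeff[OF that(1)] that a(1) b(1) \<open>e > 0\<close> by simp_all
    then have "e * a r = 0"
      by linarith
    then show ?thesis
      using \<open>e > 0\<close> by simp
  qed
  then have "t = (\<Sum>r\<in>S. if r = s then a s *\<^sub>R s else 0)"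
    unfolding a(2) by (intro sum.cong) auto
  then have "t = a s *\<^sub>R s"
    using S(1,3) by simp
  then show ?thesis
    by (simp add: span_scale span_base)
qed

lemma mem_pos_hull_iff_dual:
  assumes "finite S" and g: "\<And>s. s \<in> S \<Longrightarrow> linear (g s)"
    "\<And>s t. s \<in> S \<Longrightarrow> t \<in> S \<Longrightarrow> g s t = (if s = t then 1 else 0)"
  shows "u \<in> pos_hull S \<longleftrightarrow> (\<Sum>s\<in>S. g s u *\<^sub>R s) = u \<and> (\<forall>s\<in>S. g s u \<ge> 0)"
proof
  assume "u \<in> pos_hull S"
  then obtain a where a: "\<forall>s\<in>S. a s \<ge> 0" "u = (\<Sum>s\<in>S. a s *\<^sub>R s)"
    unfolding pos_hull_def by blast
  have "g s u = a s" if "s \<in> S" for s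
  proof -
    have "g s u = (\<Sum>t\<in>S. a t * g s t)"
      using g(1)[OF that] by (simp add: a(2) linear_sum linear_scale)
    also have "\<dots> = (\<Sum>t\<in>S. if t = s then a s else 0)"
      using g(2)[OF that] by (intro sum.cong) auto
    also have "\<dots> = a s"
      using assms(1) that by simp
    finally show ?thesis .
  qed
  then show "(\<Sum>s\<in>S. g s u *\<^sub>R s) = u \<and> (\<forall>s\<in>S. g s u \<ge> 0)"
    using a by simp
qed (auto simp: pos_hull_def)

definition cone_coordinates ::
    "('n::finite \<Rightarrow> 'a::euclidean_space) \<Rightarrow> 'a set \<Rightarrow> ('n \<Rightarrow> 'a \<Rightarrow> real) \<Rightarrow> bool" where
  "cone_coordinates v \<tau> c \<longleftrightarrow> (\<forall>j. linear (c j) \<and> (v j \<notin> \<tau> \<longrightarrow> c j = (\<lambda>_. 0))) \<and>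
     (\<forall>u. u \<in> \<tau> \<longleftrightarrow> (\<Sum>j\<in>UNIV. c j u *\<^sub>R v j) = u \<and> (\<forall>j. c j u \<ge> 0))"

lemma cone_coordinatesD:
  assumes "cone_coordinates v \<tau> c"
  shows cone_coordinates_linear: "linear (c j)"
    and cone_coordinates_outside: "v j \<notin> \<tau> \<Longrightarrow> c j u = 0"
    and cone_coordinates_expansion: "u \<in> \<tau> \<Longrightarrow> (\<Sum>j\<in>UNIV. c j u *\<^sub>R v j) = u"
    and cone_coordinates_nonneg: "u \<in> \<tau> \<Longrightarrow> c j u \<ge> 0"
    and cone_coordinates_mem: "(\<Sum>j\<in>UNIV. c j u *\<^sub>R v j) = u \<Longrightarrow> (\<And>j. c j u \<ge> 0) \<Longrightarrow> u \<in> \<tau>"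
  using assms unfolding cone_coordinates_def by metis+

lemma semialgebraic_cone_coordinates:
  assumes "cone_coordinates v \<tau> c"
  shows "semialgebraic \<tau>"
proof -
  have lin: "linear (c j)" for j
    using assms by (rule cone_coordinates_linear)
  then have "linear (\<lambda>u. (\<Sum>j\<in>UNIV. c j u *\<^sub>R v j) - u)"
    by (intro linear_compose_sub linear_ident linear_compose_sum ballI linear_compose_scaleR_left) simp_all
  then have "semialgebraic {u. (\<Sum>j\<in>UNIV. c j u *\<^sub>R v j) - u = 0}"
    by (rule semialgebraic_linear_kernel)
  moreover have "semialgebraic (\<Inter>j\<in>UNIV. {u. c j u \<ge> 0})"
    using lin by (intro semialgebraic_INT semialgebraic_polyfun_nonneg polyfun_linear) simp_all
  moreover have "u \<in> \<tau> \<longleftrightarrow> (\<Sum>j\<in>UNIV. c j u *\<^sub>R v j) - u = 0 \<and> (\<forall>j. c j u \<ge> 0)" for u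
    using cone_coordinates_expansion[OF assms, of u] cone_coordinates_nonneg[OF assms, of u]
      cone_coordinates_mem[OF assms, of u] by (metis right_minus_eq)
  then have "\<tau> = {u. (\<Sum>j\<in>UNIV. c j u *\<^sub>R v j) - u = 0} \<inter> (\<Inter>j\<in>UNIV. {u. c j u \<ge> 0})"
    by blast
  ultimately show ?thesis
    by (simp add: semialgebraic_Int)
qed

lemma cone_coordinates_inner:
  assumes "cone_coordinates v \<tau> c" "u \<in> \<tau>" "\<And>j. v j \<in> \<tau> \<Longrightarrow> x \<bullet> v j = h j"
  shows "x \<bullet> u = (\<Sum>j\<in>UNIV. c j u * h j)"
proof -
  define w where "w = (\<Sum>j\<in>UNIV. c j u *\<^sub>R v j)"
  have "w = u"
    unfolding w_def using assms(1,2) by (rule cone_coordinates_expansion)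
  moreover have "c j u * (x \<bullet> v j) = c j u * h j" for j
    using assms(3) cone_coordinates_outside[OF assms(1)] by (cases "v j \<in> \<tau>") auto
  then have "x \<bullet> w = (\<Sum>j\<in>UNIV. c j u * h j)"
    unfolding w_def inner_sum_right inner_scaleR_right by (intro sum.cong refl)
  ultimately show ?thesis
    by simp
qed

lemma inj_on_ray_index:
  assumes "independent S" and gen: "\<And>s. s \<in> S \<Longrightarrow> \<gamma> s > 0 \<and> \<gamma> s *\<^sub>R v (r s) = s"
  shows "inj_on r S"
proof (rule inj_onI, rule ccontr)
  fix s s' assume s: "s \<in> S" "s' \<in> S" "r s = r s'" "s \<noteq> s'"
  have "(\<gamma> s / \<gamma> s') *\<^sub>R s' = (\<gamma> s / \<gamma> s') *\<^sub>R (\<gamma> s' *\<^sub>R v (r s))"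
    using gen[OF s(2)] s(3) by simp
  also have "\<dots> = \<gamma> s *\<^sub>R v (r s)"
    using gen[OF s(2)] by simp
  also have "\<dots> = s"
    using gen[OF s(1)] by simp
  finally have "(\<gamma> s / \<gamma> s') *\<^sub>R s' = s" .
  moreover have "(\<gamma> s / \<gamma> s') *\<^sub>R s' \<in> span (S - {s})"
    using s(2,4) by (intro span_scale span_base) simp
  ultimately have "s \<in> span (S - {s})"
    by simp
  then have "dependent S"
    using s(1) unfolding dependent_def by blast
  then show False
    using assms(1) by simp
qed

lemma cone_coordinates_pos_hull:
  fixes v :: "'n::finite \<Rightarrow> 'a::euclidean_space"
  assumes S: "finite S" "independent S"
    and gen: "\<And>s. s \<in> S \<Longrightarrow> \<gamma> s > 0 \<and> \<gamma> s *\<^sub>R v (r s) = s"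
  shows "\<exists>c. cone_coordinates v (pos_hull S) c"
proof -
  obtain g :: "'a \<Rightarrow> 'a \<Rightarrow> real"
    where g: "\<And>s. linear (g s)" "\<And>s t. t \<in> S \<Longrightarrow> g s t = (if s = t then 1 else 0)"
    using independent_dual_functionals[OF S(2)] by blast
  have "inj_on r S"
    using S(2) gen by (rule inj_on_ray_index)
  define c where "c j u = (\<Sum>s\<in>{s\<in>S. r s = j}. \<gamma> s * g s u)" for j u
  have c_index: "c (r s) u = \<gamma> s * g s u" if "s \<in> S" for s u
  proof -
    have "{s'\<in>S. r s' = r s} = {s}"
      using \<open>inj_on r S\<close> that by (auto dest: inj_onD)
    then show ?thesis
      by (simp add: c_def)
  qed
  have c_expansion: "(\<Sum>j\<in>UNIV. c j u *\<^sub>R v j) = (\<Sum>s\<in>S. g s u *\<^sub>R s)" for u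
  proof -
    have "(\<Sum>j\<in>UNIV. c j u *\<^sub>R v j) = (\<Sum>j\<in>UNIV. \<Sum>s\<in>{s\<in>S. r s = j}. g s u *\<^sub>R \<gamma> s *\<^sub>R v (r s))"
      unfolding c_def scaleR_sum_left by (intro sum.cong) (auto simp: mult.commute)
    also have "\<dots> = (\<Sum>s\<in>S. g s u *\<^sub>R \<gamma> s *\<^sub>R v (r s))"
      using S(1) by (intro sum.group) auto
    also have "\<dots> = (\<Sum>s\<in>S. g s u *\<^sub>R s)"
      using gen by (intro sum.cong) auto
    finally show ?thesis .
  qed
  have c_nonneg: "(\<forall>j. c j u \<ge> 0) \<longleftrightarrow> (\<forall>s\<in>S. g s u \<ge> 0)" for u
  proof
    assume "\<forall>j. c j u \<ge> 0"
    then show "\<forall>s\<in>S. g s u \<ge> 0"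
      using c_index gen by (metis zero_le_mult_iff not_less)
  next
    assume "\<forall>s\<in>S. g s u \<ge> 0"
    then show "\<forall>j. c j u \<ge> 0"
      unfolding c_def using gen by (auto intro!: sum_nonneg mult_nonneg_nonneg simp: less_imp_le)
  qed
  have "linear (\<lambda>u. \<gamma> s * g s u)" for s
    using g(1)[of s] unfolding linear_iff by (simp add: algebra_simps)
  then have "linear (c j)" for j
    unfolding c_def by (intro linear_compose_sum ballI)
  moreover have "c j = (\<lambda>_. 0)" if "v j \<notin> pos_hull S" for j
  proof -
    have "v (r s) \<in> pos_hull S" if "s \<in> S" for s
    proof -
      have pos: "\<gamma> s > 0" and eq: "\<gamma> s *\<^sub>R v (r s) = s"
        using gen[OF that] by auto
      have "(1 / \<gamma> s) *\<^sub>R s = (1 / \<gamma> s) *\<^sub>R \<gamma> s *\<^sub>R v (r s)"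
        using eq by simp
      also have "\<dots> = v (r s)"
        using pos by simp
      finally show ?thesis
        using scaleR_mem_pos_hull[OF S(1) that, of "1 / \<gamma> s"] pos by simp
    qed
    then have empty: "{s\<in>S. r s = j} = {}"
      using that by blast
    show ?thesis
      by (intro ext) (simp only: c_def empty sum.empty)
  qed
  moreover have "u \<in> pos_hull S \<longleftrightarrow> (\<Sum>j\<in>UNIV. c j u *\<^sub>R v j) = u \<and> (\<forall>j. c j u \<ge> 0)" for u
    unfolding c_expansion c_nonneg by (rule mem_pos_hull_iff_dual[OF S(1)]) (simp_all add: g)
  ultimately show ?thesis
    unfolding cone_coordinates_def by blast
qed

definition cone_coords ::
    "('n::finite \<Rightarrow> 'a::euclidean_space) \<Rightarrow> 'a set \<Rightarrow> 'n \<Rightarrow> 'a \<Rightarrow> real" where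
  "cone_coords v \<tau> = (SOME c. cone_coordinates v \<tau> c)"

section \<open>Support vectors of deformation cones\<close>

lemma norm_le_if_inner_rays_le:
  fixes v :: "'n::finite \<Rightarrow> 'a::euclidean_space"
  assumes spanning: "\<And>u. \<exists>c. (\<forall>j. c j \<ge> 0) \<and> (\<Sum>j\<in>UNIV. c j *\<^sub>R v j) = u"
  obtains B where "\<And>h x. (\<And>j. x \<bullet> v j \<le> h $ j) \<Longrightarrow> norm x \<le> B * norm h"
proof -
  obtain c where c: "\<And>u j. c u j \<ge> 0" "\<And>u. (\<Sum>j\<in>UNIV. c u j *\<^sub>R v j) = u"
    using spanning by metis
  define L where "L u = (\<Sum>j\<in>UNIV. c u j)" for u
  have L_nonneg: "L u \<ge> 0" for u
    unfolding L_def using c(1) by (simp add: sum_nonneg)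
  have upper: "x \<bullet> u \<le> L u * norm h" if x: "\<And>j. x \<bullet> v j \<le> h $ j" for x h u
  proof -
    have "x \<bullet> u = x \<bullet> (\<Sum>j\<in>UNIV. c u j *\<^sub>R v j)"
      by (simp add: c(2))
    also have "\<dots> = (\<Sum>j\<in>UNIV. c u j * (x \<bullet> v j))"
      by (simp add: inner_sum_right)
    also have "\<dots> \<le> (\<Sum>j\<in>UNIV. c u j * norm h)"
    proof (intro sum_mono mult_left_mono c(1))
      fix j
      show "x \<bullet> v j \<le> norm h"
        using x[of j] component_le_norm_cart[of h j] by linarith
    qed
    also have "\<dots> = L u * norm h"
      by (simp add: L_def sum_distrib_right)
    finally show ?thesis .
  qed
  have "norm x \<le> (\<Sum>b\<in>Basis. L b + L (- b)) * norm h" if x: "\<And>j. x \<bullet> v j \<le> h $ j" for x h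
  proof -
    have "norm x \<le> (\<Sum>b\<in>Basis. \<bar>x \<bullet> b\<bar>)"
      by (rule norm_le_l1)
    also have "\<dots> \<le> (\<Sum>b\<in>Basis. (L b + L (- b)) * norm h)"
    proof (rule sum_mono)
      fix b :: 'a
      have "0 \<le> L b * norm h" "0 \<le> L (- b) * norm h"
        using L_nonneg by simp_all
      then show "\<bar>x \<bullet> b\<bar> \<le> (L b + L (- b)) * norm h"
        using upper[OF x, of b] upper[OF x, of "- b"] unfolding abs_le_iff distrib_right by simp
    qed
    also have "\<dots> = (\<Sum>b\<in>Basis. L b + L (- b)) * norm h"
      by (simp add: sum_distrib_right)
    finally show ?thesis .
  qed
  then show ?thesis
    using that by blast
qed

definition deformation_heights :: "'a::euclidean_space set set \<Rightarrow> ('n::finite \<Rightarrow> 'a) \<Rightarrow> (real^'n) set" where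
  "deformation_heights \<Delta> v =
     {h. \<forall>\<tau>\<in>\<Delta>. \<exists>x. (\<forall>j. x \<bullet> v j \<le> h $ j) \<and> (\<forall>j. v j \<in> \<tau> \<longrightarrow> x \<bullet> v j = h $ j)}"

lemma zero_mem_deformation_heights: "0 \<in> deformation_heights \<Delta> v"
  unfolding deformation_heights_def by (auto intro: exI[of _ 0])

lemma convex_deformation_heights: "convex (deformation_heights \<Delta> v)"
  unfolding convex_def
proof (intro ballI allI impI)
  fix h1 h2 and a b :: real
  assume h: "h1 \<in> deformation_heights \<Delta> v" "h2 \<in> deformation_heights \<Delta> v" and ab: "0 \<le> a" "0 \<le> b" "a + b = 1"
  show "a *\<^sub>R h1 + b *\<^sub>R h2 \<in> deformation_heights \<Delta> v"
    unfolding deformation_heights_def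
  proof (intro CollectI ballI)
    fix \<tau> assume "\<tau> \<in> \<Delta>"
    then obtain x1 x2 where x1: "\<forall>j. x1 \<bullet> v j \<le> h1 $ j" "\<forall>j. v j \<in> \<tau> \<longrightarrow> x1 \<bullet> v j = h1 $ j"
      and x2: "\<forall>j. x2 \<bullet> v j \<le> h2 $ j" "\<forall>j. v j \<in> \<tau> \<longrightarrow> x2 \<bullet> v j = h2 $ j"
      using h unfolding deformation_heights_def by blast
    have "(a *\<^sub>R x1 + b *\<^sub>R x2) \<bullet> v j \<le> (a *\<^sub>R h1 + b *\<^sub>R h2) $ j" for j
      using mult_left_mono[OF x1(1)[rule_format, of j] ab(1)] mult_left_mono[OF x2(1)[rule_format, of j] ab(2)]
      by (simp add: inner_add_left)
    moreover have "(a *\<^sub>R x1 + b *\<^sub>R x2) \<bullet> v j = (a *\<^sub>R h1 + b *\<^sub>R h2) $ j" if "v j \<in> \<tau>" for j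
      using x1(2) x2(2) that by (simp add: inner_add_left)
    ultimately show "\<exists>x. (\<forall>j. x \<bullet> v j \<le> (a *\<^sub>R h1 + b *\<^sub>R h2) $ j) \<and>
        (\<forall>j. v j \<in> \<tau> \<longrightarrow> x \<bullet> v j = (a *\<^sub>R h1 + b *\<^sub>R h2) $ j)"
      by blast
  qed
qed

lemma closed_deformation_heights:
  assumes bound: "\<And>h x. (\<And>j. x \<bullet> v j \<le> h $ j) \<Longrightarrow> norm x \<le> B * norm h"
  shows "closed (deformation_heights \<Delta> v)"
  unfolding closed_sequential_limits
proof (intro allI impI, elim conjE)
  fix hs l
  assume hs: "\<forall>n. hs n \<in> deformation_heights \<Delta> v" and lim: "hs \<longlonglongrightarrow> l"
  obtain K where K: "\<And>n. norm (hs n) \<le> K"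
    using convergent_imp_bounded[OF lim] by (auto simp: bounded_iff)
  show "l \<in> deformation_heights \<Delta> v"
    unfolding deformation_heights_def
  proof (intro CollectI ballI)
    fix \<tau> assume "\<tau> \<in> \<Delta>"
    then have "\<forall>n. \<exists>x. (\<forall>j. x \<bullet> v j \<le> hs n $ j) \<and> (\<forall>j. v j \<in> \<tau> \<longrightarrow> x \<bullet> v j = hs n $ j)"
      using hs unfolding deformation_heights_def by blast
    then obtain X where X: "\<And>n j. X n \<bullet> v j \<le> hs n $ j" "\<And>n j. v j \<in> \<tau> \<Longrightarrow> X n \<bullet> v j = hs n $ j"
      by metis
    have "norm (X n) \<le> \<bar>B\<bar> * K" for n
    proof -
      have "norm (X n) \<le> B * norm (hs n)"
        using bound[OF X(1)] .
      also have "\<dots> \<le> \<bar>B\<bar> * norm (hs n)"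
        by (simp add: mult_right_mono)
      also have "\<dots> \<le> \<bar>B\<bar> * K"
        using K[of n] by (simp add: mult_left_mono)
      finally show ?thesis .
    qed
    then have "bounded (range X)"
      unfolding bounded_iff by blast
    then obtain x r where r: "strict_mono r" "(X \<circ> r) \<longlonglongrightarrow> x"
      using bounded_imp_convergent_subsequence by blast
    have lim_x: "(\<lambda>n. X (r n) \<bullet> v j) \<longlonglongrightarrow> x \<bullet> v j" for j
      using r(2) by (intro tendsto_inner tendsto_const) (simp add: o_def)
    have lim_l: "(\<lambda>n. hs (r n) $ j) \<longlonglongrightarrow> l $ j" for j
      using LIMSEQ_subseq_LIMSEQ[OF lim r(1)] by (intro tendsto_vec_nth) (simp add: o_def)
    have "x \<bullet> v j \<le> l $ j" for j
      using X(1) by (intro LIMSEQ_le[OF lim_x lim_l]) auto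
    moreover have "x \<bullet> v j = l $ j" if "v j \<in> \<tau>" for j
      using lim_x[of j] lim_l[of j] X(2)[OF that] LIMSEQ_unique by auto
    ultimately show "\<exists>x. (\<forall>j. x \<bullet> v j \<le> l $ j) \<and> (\<forall>j. v j \<in> \<tau> \<longrightarrow> x \<bullet> v j = l $ j)"
      by blast
  qed
qed

lemma support_point_on_cone:
  assumes "P \<in> deformation_cone \<Delta>" and "\<tau> \<in> \<Delta>"
  obtains x where "x \<in> P" and "\<And>u. u \<in> \<tau> \<Longrightarrow> x \<bullet> u = support_fn P u"
proof -
  obtain F where F: "F face_of P" "F \<noteq> {}" "\<tau> \<subseteq> normal_cone P F"
    using assms unfolding deformation_cone_def coarsened_by_def normal_fan_def by blast
  then obtain x where "x \<in> F"
    by blast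
  then have "x \<in> P"
    using F(1) face_of_imp_subset by blast
  moreover have "x \<bullet> u = support_fn P u" if "u \<in> \<tau>" for u
    using F(3) that \<open>x \<in> F\<close> unfolding normal_cone_def by blast
  ultimately show ?thesis
    by (rule that)
qed

lemma support_vector_mem_deformation_heights:
  assumes "P \<in> deformation_cone \<Delta>"
  shows "support_vector v P \<in> deformation_heights \<Delta> v"
  unfolding deformation_heights_def
proof (intro CollectI ballI)
  fix \<tau> assume "\<tau> \<in> \<Delta>"
  with assms obtain x where x: "x \<in> P" "\<And>u. u \<in> \<tau> \<Longrightarrow> x \<bullet> u = support_fn P u"
    by (rule support_point_on_cone) blast
  have "bounded P"
    using assms by (simp add: deformation_cone_def polytope_imp_bounded)
  then show "\<exists>x. (\<forall>j. x \<bullet> v j \<le> support_vector v P $ j) \<and>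
      (\<forall>j. v j \<in> \<tau> \<longrightarrow> x \<bullet> v j = support_vector v P $ j)"
    using x support_fn_upper[OF _ x(1)] by (intro exI[of _ x]) (simp add: support_vector_def)
qed

section \<open>Simplicial normal fans\<close>

locale simplicial_normal_fan =
  fixes Q :: "'a::euclidean_space set" and \<Delta> :: "'a set set" and v :: "'n::finite \<Rightarrow> 'a"
  assumes polytope_Q: "polytope Q" and Q_nonempty: "Q \<noteq> {}" and fan_eq: "\<Delta> = normal_fan Q"
    and simplicial: "simplicial_fan \<Delta>" and rays: "ray_generators \<Delta> v"
begin

lemma normal_cone_support_face_mem: "normal_cone Q (support_face Q u) \<in> \<Delta>"
proof -
  have "support_face Q u face_of Q"
    using polytope_Q by (intro support_face_face_of polytope_imp_convex polytope_imp_bounded)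
  moreover have "support_face Q u \<noteq> {}"
    using polytope_Q Q_nonempty by (intro support_face_nonempty polytope_imp_compact)
  ultimately show ?thesis
    unfolding fan_eq normal_fan_def by blast
qed

lemma fan_covers: "\<exists>\<tau>\<in>\<Delta>. u \<in> \<tau>"
  using normal_cone_support_face_mem mem_normal_cone_support_face by blast

lemma finite_fan: "finite \<Delta>"
proof -
  have "\<Delta> \<subseteq> normal_cone Q ` {F. F face_of Q}"
    unfolding fan_eq normal_fan_def by blast
  then show ?thesis
    using finite_polytope_faces[OF polytope_Q] finite_surj by blast
qed

lemma one_dimensional_cones: "{\<sigma>\<in>\<Delta>. aff_dim \<sigma> = 1} = range (\<lambda>j. pos_hull {v j})"
  using rays unfolding ray_generators_def by (elim conjE)

lemma ray_cone_mem: "pos_hull {v j} \<in> \<Delta>"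
  using one_dimensional_cones by blast

text \<open>The normal cone of the face of \<open>Q\<close> maximising \<open>s\<close> is a cone of \<open>\<Delta>\<close> inside \<open>\<sigma>\<close>
  containing \<open>s\<close> in its relative interior. As \<open>s\<close> spans an extreme ray of \<open>\<sigma>\<close>, that cone is
  one-dimensional, hence the ray of some \<open>v j\<close>.\<close>

lemma simplicial_generator_is_ray:
  assumes \<sigma>: "\<sigma> \<in> \<Delta>" "\<sigma> = pos_hull S" and S: "finite S" "independent S" "s \<in> S"
  shows "\<exists>j \<gamma>. \<gamma> > 0 \<and> \<gamma> *\<^sub>R v j = s"
proof -
  have "s \<noteq> 0"
    using S(2,3) dependent_zero by blast
  have "s \<in> \<sigma>"
    using scaleR_mem_pos_hull[OF S(1,3), of 1] \<sigma>(2) by simp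
  obtain F where F: "F face_of Q" "\<sigma> = normal_cone Q F"
    using \<sigma>(1) unfolding fan_eq normal_fan_def by blast
  define \<tau> where "\<tau> = normal_cone Q (support_face Q s)"
  have "\<tau> \<in> \<Delta>" "s \<in> \<tau>" "0 \<in> \<tau>"
    unfolding \<tau>_def using normal_cone_support_face_mem mem_normal_cone_support_face
      zero_mem_normal_cone[OF Q_nonempty] by blast+
  have "F \<subseteq> support_face Q s"
    using \<open>s \<in> \<sigma>\<close> face_of_imp_subset[OF F(1)] unfolding F(2) normal_cone_def support_face_def
    by blast
  then have "\<tau> \<subseteq> \<sigma>"
    unfolding \<tau>_def F(2) by (rule normal_cone_antimono)
  have "\<tau> \<subseteq> span {s}"
  proof
    fix t assume "t \<in> \<tau>"
    then obtain e where "e > 0" "s - e *\<^sub>R t \<in> \<tau>"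
      unfolding \<tau>_def using normal_cone_support_face_perturb[OF polytope_Q] by blast
    then show "t \<in> span {s}"
      using pos_hull_extreme_ray[OF S] \<open>t \<in> \<tau>\<close> \<open>\<tau> \<subseteq> \<sigma>\<close> \<sigma>(2) by blast
  qed
  have "aff_dim \<tau> = 1"
  proof (rule antisym)
    have "aff_dim \<tau> \<le> aff_dim (span {s})"
      using \<open>\<tau> \<subseteq> span {s}\<close> by (rule aff_dim_subset)
    then show "aff_dim \<tau> \<le> 1"
      using \<open>s \<noteq> 0\<close> by (simp add: aff_dim_subspace dim_span)
    have "aff_dim {0, s} \<le> aff_dim \<tau>"
      using \<open>0 \<in> \<tau>\<close> \<open>s \<in> \<tau>\<close> by (intro aff_dim_subset) simp
    then show "1 \<le> aff_dim \<tau>"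
      using \<open>s \<noteq> 0\<close> by simp
  qed
  then have "\<tau> \<in> range (\<lambda>j. pos_hull {v j})"
    using \<open>\<tau> \<in> \<Delta>\<close> one_dimensional_cones by blast
  then obtain j where "s \<in> pos_hull {v j}"
    using \<open>s \<in> \<tau>\<close> by blast
  then obtain \<gamma> where "\<gamma> \<ge> 0" "\<gamma> *\<^sub>R v j = s"
    unfolding pos_hull_singleton by blast
  moreover have "\<gamma> \<noteq> 0"
    using \<open>s \<noteq> 0\<close> \<open>\<gamma> *\<^sub>R v j = s\<close> by auto
  ultimately show ?thesis
    by (intro exI[of _ j] exI[of _ \<gamma>]) simp
qed

lemma cone_coordinates_cone_coords:
  assumes "\<tau> \<in> \<Delta>"
  shows "cone_coordinates v \<tau> (cone_coords v \<tau>)"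
proof -
  obtain S where S: "finite S" "independent S" "\<tau> = pos_hull S"
    using simplicial assms unfolding simplicial_fan_def by blast
  then have "\<forall>s\<in>S. \<exists>j \<gamma>. \<gamma> > 0 \<and> \<gamma> *\<^sub>R v j = s"
    using simplicial_generator_is_ray[OF assms] by blast
  then obtain r \<gamma> where "\<And>s. s \<in> S \<Longrightarrow> \<gamma> s > 0 \<and> \<gamma> s *\<^sub>R v (r s) = s"
    by metis
  then have "\<exists>c. cone_coordinates v \<tau> c"
    unfolding S(3) using S(1,2) by (intro cone_coordinates_pos_hull)
  then show ?thesis
    unfolding cone_coords_def by (rule someI_ex)
qed

lemma positively_spanning: "\<exists>c. (\<forall>j. c j \<ge> 0) \<and> (\<Sum>j\<in>UNIV. c j *\<^sub>R v j) = u"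
proof -
  obtain \<tau> where "\<tau> \<in> \<Delta>" "u \<in> \<tau>"
    using fan_covers by blast
  then have c: "cone_coordinates v \<tau> (cone_coords v \<tau>)"
    by (intro cone_coordinates_cone_coords)
  show ?thesis
    by (intro exI[of _ "\<lambda>j. cone_coords v \<tau> j u"] conjI allI
        cone_coordinates_nonneg[OF c \<open>u \<in> \<tau>\<close>] cone_coordinates_expansion[OF c \<open>u \<in> \<tau>\<close>])
qed

lemma support_fn_on_cone:
  assumes "P \<in> deformation_cone \<Delta>" and "\<tau> \<in> \<Delta>" and "u \<in> \<tau>"
  shows "support_fn P u = (\<Sum>j\<in>UNIV. cone_coords v \<tau> j u * support_fn P (v j))"
proof -
  obtain x where "x \<in> P" and x: "\<And>u. u \<in> \<tau> \<Longrightarrow> x \<bullet> u = support_fn P u"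
    using support_point_on_cone[OF assms(1,2)] by blast
  have "support_fn P u = x \<bullet> u"
    using x[OF assms(3)] by simp
  also have "\<dots> = (\<Sum>j\<in>UNIV. cone_coords v \<tau> j u * support_fn P (v j))"
    using cone_coordinates_cone_coords[OF assms(2)] assms(3) x by (rule cone_coordinates_inner)
  finally show ?thesis .
qed

lemma polytope_heights: "polytope {x. \<forall>j. x \<bullet> v j \<le> h $ j}"
proof -
  obtain B where "\<And>h x. (\<And>j. x \<bullet> v j \<le> h $ j) \<Longrightarrow> norm x \<le> B * norm h"
    by (rule norm_le_if_inner_rays_le[OF positively_spanning]) blast
  then have "bounded {x. \<forall>j. x \<bullet> v j \<le> h $ j}"
    unfolding bounded_iff by blast
  moreover have "{x. \<forall>j. x \<bullet> v j \<le> h $ j} = (\<Inter>j. {x. v j \<bullet> x \<le> h $ j})"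
    by (auto simp: inner_commute)
  then have "polyhedron {x. \<forall>j. x \<bullet> v j \<le> h $ j}"
    by (auto intro: polyhedron_Inter polyhedron_halfspace_le)
  ultimately show ?thesis
    by (simp add: polytope_eq_bounded_polyhedron)
qed

lemma support_fn_heights_on_cone:
  assumes "\<tau> \<in> \<Delta>" "u \<in> \<tau>" and x: "\<forall>j. x \<bullet> v j \<le> h $ j" "\<And>j. v j \<in> \<tau> \<Longrightarrow> x \<bullet> v j = h $ j"
  shows "support_fn {x. \<forall>j. x \<bullet> v j \<le> h $ j} u = x \<bullet> u"
proof (rule support_fn_eqI)
  let ?c = "cone_coords v \<tau>"
  have c: "cone_coordinates v \<tau> ?c"
    using assms(1) by (rule cone_coordinates_cone_coords)
  fix y assume "y \<in> {x. \<forall>j. x \<bullet> v j \<le> h $ j}"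
  have "y \<bullet> u = (\<Sum>j\<in>UNIV. ?c j u * (y \<bullet> v j))"
    using c assms(2) by (rule cone_coordinates_inner) simp
  also have "\<dots> \<le> (\<Sum>j\<in>UNIV. ?c j u * h $ j)"
    using \<open>y \<in> _\<close> cone_coordinates_nonneg[OF c assms(2)] by (intro sum_mono mult_left_mono) auto
  also have "\<dots> = x \<bullet> u"
    using c assms(2) x(2) by (rule cone_coordinates_inner[symmetric])
  finally show "y \<bullet> u \<le> x \<bullet> u" .
qed (use x in simp)

lemma deformation_heights_imp_support_vector:
  assumes h: "h \<in> deformation_heights \<Delta> v"
  shows "\<exists>P\<in>deformation_cone \<Delta>. support_vector v P = h"
proof -
  define P where "P = {x. \<forall>j. x \<bullet> v j \<le> h $ j}"
  have witness: "\<exists>x. (\<forall>j. x \<bullet> v j \<le> h $ j) \<and> (\<forall>j. v j \<in> \<tau> \<longrightarrow> x \<bullet> v j = h $ j)"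
    if "\<tau> \<in> \<Delta>" for \<tau>
    using h that unfolding deformation_heights_def by blast
  have "P \<noteq> {}"
    using witness[OF ray_cone_mem] unfolding P_def by blast
  have "support_fn P (v j) = h $ j" for j
  proof -
    have vj: "v j \<in> pos_hull {v j}"
      using scaleR_mem_pos_hull[of "{v j}" "v j" 1] by simp
    obtain x where x: "\<forall>i. x \<bullet> v i \<le> h $ i" "\<forall>i. v i \<in> pos_hull {v j} \<longrightarrow> x \<bullet> v i = h $ i"
      using witness[OF ray_cone_mem] by blast
    have "support_fn P (v j) = x \<bullet> v j"
      unfolding P_def using ray_cone_mem vj x(1) by (rule support_fn_heights_on_cone) (use x(2) in blast)
    also have "\<dots> = h $ j"
      using x(2) vj by blast
    finally show ?thesis .
  qed
  then have "support_vector v P = h"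
    by (simp add: support_vector_def vec_eq_iff)
  moreover have "coarsened_by (normal_fan P) \<Delta>"
    unfolding coarsened_by_def
  proof
    fix \<tau> assume "\<tau> \<in> \<Delta>"
    then obtain x where x: "\<forall>j. x \<bullet> v j \<le> h $ j" "\<And>j. v j \<in> \<tau> \<Longrightarrow> x \<bullet> v j = h $ j"
      using witness by blast
    have "\<tau> \<noteq> {}"
      using \<open>\<tau> \<in> \<Delta>\<close> zero_mem_normal_cone[OF Q_nonempty] unfolding fan_eq normal_fan_def by blast
    moreover have "x \<in> P"
      using x(1) by (simp add: P_def)
    ultimately show "\<exists>\<sigma>\<in>normal_fan P. \<tau> \<subseteq> \<sigma>"
      unfolding P_def using support_fn_heights_on_cone[OF \<open>\<tau> \<in> \<Delta>\<close> _ x] polytope_heights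
      by (intro subset_normal_fan_cone) auto
  qed
  ultimately show ?thesis
    using polytope_heights \<open>P \<noteq> {}\<close> unfolding deformation_cone_def P_def by blast
qed

lemma support_vectors_eq_deformation_heights:
  "support_vector v ` deformation_cone \<Delta> = deformation_heights \<Delta> v"
  using support_vector_mem_deformation_heights deformation_heights_imp_support_vector by blast

end

section \<open>The least-squares estimator\<close>

definition design_matrix :: "('m \<Rightarrow> 'n \<Rightarrow> real^'d \<Rightarrow> real) \<Rightarrow> real^'d^'m \<Rightarrow> real^'n^'m" where
  "design_matrix C U = (\<chi> i j. C i j (U $ i))"

lemma semialgebraic_det_stacked_gram_design_nonzero:
  fixes B :: "real^'n^'k" and C :: "'m::finite \<Rightarrow> 'n \<Rightarrow> real^'d \<Rightarrow> real"
  assumes "\<And>i j. linear (C i j)"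
  shows "semialgebraic {U. det (stacked_gram (design_matrix C U) B) \<noteq> 0}"
proof (intro semialgebraic_polyfun_nonzero polyfun_det)
  fix j l
  have "polyfun (\<lambda>U :: real^'d^'m. C i j (U $ i))" for i j
    using assms by (intro polyfun_linear linear_compose[OF bounded_linear.linear[OF bounded_linear_vec_nth], unfolded o_def])
  then show "polyfun (\<lambda>U. stacked_gram (design_matrix C U) B $ j $ l)"
    unfolding stacked_gram_def design_matrix_def
    by (simp add: matrix_matrix_mult_def transpose_def)
      (intro polyfun.add polyfun_sum polyfun.mult polyfun.const; simp)
qed

lemma ls_loss_le_iff:
  fixes U :: "real^'d^'m" and A :: "real^'n^'m"
  assumes "\<And>i. support_fn P (U $ i) = (A *v support_vector v P) $ i"
    and "\<And>i. support_fn P' (U $ i) = (A *v support_vector v P') $ i"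
  shows "ls_loss U y P \<le> ls_loss U y P' \<longleftrightarrow>
    dist (A *v support_vector v P) y \<le> dist (A *v support_vector v P') y"
proof -
  have loss: "ls_loss U y P = dist (A *v support_vector v P) y ^ 2 / CARD('m)"
    if "\<And>i. support_fn P (U $ i) = (A *v support_vector v P) $ i" for P
    unfolding ls_loss_def that dist_norm power2_norm_eq_inner
    by (simp add: inner_vec_def power2_eq_square)
  show ?thesis
    unfolding loss[OF assms(1)] loss[OF assms(2)]
    by (simp add: divide_le_cancel power_mono_iff)
qed

lemma lse_eq_nearest:
  fixes U :: "real^'d^'m" and A :: "real^'n^'m" and v :: "'n::finite \<Rightarrow> real^'d"
  assumes "\<And>P i. P \<in> deformation_cone \<Delta> \<Longrightarrow> support_fn P (U $ i) = (A *v support_vector v P) $ i"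
  shows "lse \<Delta> v U y = {h \<in> support_vector v ` deformation_cone \<Delta>.
    \<forall>h'\<in>support_vector v ` deformation_cone \<Delta>. dist (A *v h) y \<le> dist (A *v h') y}"
  unfolding lse_def using ls_loss_le_iff[OF assms assms] by blast

lemma unique_lse_iff_det:
  fixes U :: "real^'d^'m" and v :: "'n::finite \<Rightarrow> real^'d" and B :: "real^'n^'n"
  assumes "simplicial_normal_fan Q \<Delta> v"
    and kernel: "span (support_vector v ` deformation_cone \<Delta>) = {z. B *v z = 0}"
    and cones: "\<And>i. c i \<in> \<Delta>" "\<And>i. U $ i \<in> c i"
  shows "(\<forall>y. card (lse \<Delta> v U y) = 1) \<longleftrightarrow>
    det (stacked_gram (design_matrix (\<lambda>i. cone_coords v (c i)) U) B) \<noteq> 0"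
proof -
  interpret simplicial_normal_fan Q \<Delta> v
    by fact
  define A where "A = design_matrix (\<lambda>i. cone_coords v (c i)) U"
  define H where "H = support_vector v ` deformation_cone \<Delta>"
  have "support_fn P (U $ i) = (A *v support_vector v P) $ i" if "P \<in> deformation_cone \<Delta>" for P i
    using support_fn_on_cone[OF that cones(1,2)]
    by (simp add: A_def design_matrix_def matrix_vector_mult_def support_vector_def)
  then have lse: "lse \<Delta> v U y = {h \<in> H. \<forall>h'\<in>H. dist (A *v h) y \<le> dist (A *v h') y}" for y
    unfolding H_def by (rule lse_eq_nearest)
  obtain b where "\<And>h x. (\<And>j. x \<bullet> v j \<le> h $ j) \<Longrightarrow> norm x \<le> b * norm h"
    by (rule norm_le_if_inner_rays_le[OF positively_spanning]) blast
  then have "closed H"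
    unfolding H_def support_vectors_eq_deformation_heights by (rule closed_deformation_heights)
  moreover have "convex H" "0 \<in> H"
    unfolding H_def support_vectors_eq_deformation_heights
    by (rule convex_deformation_heights zero_mem_deformation_heights)+
  ultimately have "(\<forall>y. card (lse \<Delta> v U y) = 1) \<longleftrightarrow> inj_on ((*v) A) (span H)"
    unfolding lse by (intro card_nearest_eq_1_iff matrix_vector_mul_linear)
  also have "\<dots> \<longleftrightarrow> (\<forall>z\<in>span H. A *v z = 0 \<longrightarrow> z = 0)"
    by (rule linear_inj_on_iff_eq_0[OF matrix_vector_mul_linear subspace_span])
  also have "\<dots> \<longleftrightarrow> (\<forall>z. A *v z = 0 \<and> B *v z = 0 \<longrightarrow> z = 0)"
    using kernel unfolding H_def by auto
  also have "\<dots> \<longleftrightarrow> det (stacked_gram A B) \<noteq> 0"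
    by (rule det_stacked_gram_nonzero_iff[symmetric])
  finally show ?thesis
    unfolding A_def .
qed

lemma unique_lse_eq_Union_cells:
  fixes v :: "'n::finite \<Rightarrow> real^'d" and B :: "real^'n^'n"
  assumes fan: "simplicial_normal_fan Q \<Delta> v"
    and kernel: "span (support_vector v ` deformation_cone \<Delta>) = {z. B *v z = 0}"
  shows "{U :: real^'d^'m. \<forall>y. card (lse \<Delta> v U y) = 1} =
    (\<Union>c\<in>UNIV \<rightarrow>\<^sub>E \<Delta>. {U. \<forall>i. U $ i \<in> c i} \<inter>
      {U. det (stacked_gram (design_matrix (\<lambda>i. cone_coords v (c i)) U) B) \<noteq> 0})"
proof (intro equalityI subsetI)
  fix U :: "real^'d^'m"
  assume U: "U \<in> {U. \<forall>y. card (lse \<Delta> v U y) = 1}"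
  have "\<forall>i. \<exists>\<tau>. \<tau> \<in> \<Delta> \<and> U $ i \<in> \<tau>"
    using simplicial_normal_fan.fan_covers[OF fan] by blast
  then obtain c where "\<And>i. c i \<in> \<Delta> \<and> U $ i \<in> c i"
    by (metis choice)
  then show "U \<in> (\<Union>c\<in>UNIV \<rightarrow>\<^sub>E \<Delta>. {U. \<forall>i. U $ i \<in> c i} \<inter>
      {U. det (stacked_gram (design_matrix (\<lambda>i. cone_coords v (c i)) U) B) \<noteq> 0})"
    using U unique_lse_iff_det[OF fan kernel, of c U] by auto
qed (use unique_lse_iff_det[OF fan kernel] in \<open>auto simp: PiE_iff\<close>)

theorem proposition3p8:
  fixes \<Delta> :: "(real^'d) set set" and v :: "'n::finite \<Rightarrow> real^'d"
  assumes "polytopal_fan \<Delta>" and "simplicial_fan \<Delta>" and "ray_generators \<Delta> v"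
  shows "semialgebraic {U :: real^'d^'m. \<forall>y. card (lse \<Delta> v U y) = 1}"
proof -
  obtain Q where "polytope Q" "Q \<noteq> {}" "\<Delta> = normal_fan Q"
    using assms(1) unfolding polytopal_fan_def by blast
  with assms(2,3) have fan: "simplicial_normal_fan Q \<Delta> v"
    by unfold_locales
  obtain B :: "real^'n^'n" where kernel: "span (support_vector v ` deformation_cone \<Delta>) = {z. B *v z = 0}"
    using subspace_eq_kernel_matrix[OF subspace_span] by blast
  have coords: "cone_coordinates v \<tau> (cone_coords v \<tau>)" if "\<tau> \<in> \<Delta>" for \<tau>
    using fan that by (rule simplicial_normal_fan.cone_coordinates_cone_coords)
  show ?thesis
    unfolding unique_lse_eq_Union_cells[OF fan kernel]
  proof (intro semialgebraic_UN semialgebraic_Int semialgebraic_rows_mem)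
    show "finite ((UNIV :: 'm set) \<rightarrow>\<^sub>E \<Delta>)"
      using simplicial_normal_fan.finite_fan[OF fan] by (simp add: finite_PiE)
  next
    fix c i assume "c \<in> (UNIV :: 'm set) \<rightarrow>\<^sub>E \<Delta>"
    then have "c i \<in> \<Delta>" for i
      by (auto simp: PiE_iff)
    then show "semialgebraic (c i)"
      and "semialgebraic {U. det (stacked_gram (design_matrix (\<lambda>i. cone_coords v (c i)) U) B) \<noteq> 0}"
      using coords by (auto intro: semialgebraic_cone_coordinates semialgebraic_det_stacked_gram_design_nonzero
          cone_coordinates_linear)
  qed
qed

end
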